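(* For every positive integer $\alpha$: there is no function $f$ such that $\mathrm{stcw}(G)\le f(\mathrm{ecrw}_\alpha(G))$ for all graphs $G$, and there is no function $f$ such that $\mathrm{tcw}(G)\le f(\mathrm{ecrw}_\alpha(G))$ for all graphs $G$.
   Context: A tree-cut decomposition of a graph $G$ is a pair $\mathcal{T}=(T,\{X_t\}_{t\in V(T)})$ where $T$ is a tree and the bags $X_t\subseteq V(G)$ are pairwise disjoint (possibly empty) with $\bigcup_{t\in V(T)}X_t=V(G)$. For a node $t$ of $T$, let $T_1,\dots,T_m$ be the connected components of $T-t$ and $Z_i=\bigcup_{s\in V(T_i)}X_s$; $\mathrm{cross}_{\mathcal{T}}(t)$ is the number of edges of $G$ whose two endpoints lie in two distinct sets among $Z_1,\dots,Z_m$ (if $T$ has one node, $\mathrm{cross}_{\mathcal T}(t)=0$). The crossing number of $\mathcal{T}$ is $\max_{t}\mathrm{cross}_{\mathcal{T}}(t)$, and the thickness of $\mathcal{T}$ is $\max_t|X_t|$. $\mathrm{ecrw}_\alpha(G)$ is the minimum crossing number over tree-cut decompositions of $G$ of thickness at most $\alpha$. For an edge $uv$ of $T$, the adhesion $\mathrm{adh}_{\mathcal T}(uv)$ is the set of edges of $G$ joining $\bigcup_{s\in V(T_{uv,u})}X_s$ and $\bigcup_{s\in V(T_{uv,v})}X_s$, where $T_{uv,u},T_{uv,v}$ are the components of $T-uv$ containing $u,v$. The torso $H_t$ at $t$ is $G$ if $|V(T)|=1$, and otherwise is obtained from $G$ by consolidating each $Z_i$ into a single vertex $z_i$ (replace $Z_i$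 by $z_i$ and, for each edge between $Z_i$ and $v\notin Z_i$, add an edge $z_iv$; multi-edges allowed). The 3-center $\widetilde{H_t}$ is obtained from $H_t$ by exhaustively suppressing vertices of $V(H_t)\setminus X_t$ of degree at most 2 (suppressing $v$: delete $v$, and if it had degree exactly 2 add an edge between its two neighbours). The 2-center $\widehat{H_t}$ is obtained from $H_t$ by removing the vertices of $V(H_t)\setminus X_t$ of degree 1 in $H_t$. The tree-cut width of $\mathcal T$ is $\max(\max_{uv\in E(T)}|\mathrm{adh}_{\mathcal T}(uv)|,\max_{t}|V(\widetilde{H_t})|)$ and the slim tree-cut width of $\mathcal T$ is $\max(\max_{uv\in E(T)}|\mathrm{adh}_{\mathcal T}(uv)|,\max_{t}|V(\widehat{H_t})|)$; $\mathrm{tcw}(G)$ and $\mathrm{stcw}(G)$ are the respective minima over all tree-cut decompositions of $G$. *)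

theory Defs
  imports Main "HOL-Library.Multiset"
begin

definition ugraph :: "nat set \<Rightarrow> nat set set \<Rightarrow> bool" where
  "ugraph V E \<longleftrightarrow> finite V \<and> (\<forall>e\<in>E. \<exists>u v. e = {u, v} \<and> u \<noteq> v \<and> u \<in> V \<and> v \<in> V)"

definition reach :: "nat set set \<Rightarrow> nat set \<Rightarrow> nat \<Rightarrow> nat \<Rightarrow> bool" where
  "reach F S a b \<longleftrightarrow> a \<in> S \<and> b \<in> S \<and>
     (a, b) \<in> {(x, y). {x, y} \<in> F \<and> x \<in> S \<and> y \<in> S}\<^sup>*"

definition is_tree :: "nat set \<Rightarrow> nat set set \<Rightarrow> bool" where
  "is_tree N F \<longleftrightarrow> finite N \<and> N \<noteq> {} \<and>
     (\<forall>e\<in>F. \<exists>a b. e = {a, b} \<and> a \<noteq> b \<and> a \<in> N \<and> b \<in> N) \<and>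
     (\<forall>a\<in>N. \<forall>b\<in>N. reach F N a b) \<and>
     (\<forall>e\<in>F. \<exists>a\<in>N. \<exists>b\<in>N. \<not> reach (F - {e}) N a b)"

text \<open>A decomposition is given by the tree (N, F) and the bag function X (relevant on N).\<close>
definition tcd :: "nat set \<Rightarrow> nat set set \<Rightarrow> nat set \<Rightarrow> nat set set \<Rightarrow> (nat \<Rightarrow> nat set) \<Rightarrow> bool" where
  "tcd V E N F X \<longleftrightarrow> is_tree N F \<and>
     (\<forall>s\<in>N. \<forall>t\<in>N. s \<noteq> t \<longrightarrow> X s \<inter> X t = {}) \<and> (\<Union>t\<in>N. X t) = V"

definition comps :: "nat set \<Rightarrow> nat set set \<Rightarrow> nat \<Rightarrow> nat set set" where
  "comps N F t = {{s. reach F (N - {t}) c s} | c. c \<in> N - {t}}"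

definition Zset :: "(nat \<Rightarrow> nat set) \<Rightarrow> nat set \<Rightarrow> nat set" where
  "Zset X C = (\<Union>s\<in>C. X s)"

definition cross :: "nat set set \<Rightarrow> nat set \<Rightarrow> nat set set \<Rightarrow> (nat \<Rightarrow> nat set) \<Rightarrow> nat \<Rightarrow> nat" where
  "cross E N F X t = card {e\<in>E. \<exists>C1\<in>comps N F t. \<exists>C2\<in>comps N F t. C1 \<noteq> C2 \<and>
       (\<exists>u v. e = {u, v} \<and> u \<in> Zset X C1 \<and> v \<in> Zset X C2)}"

definition crossing_number :: "nat set set \<Rightarrow> nat set \<Rightarrow> nat set set \<Rightarrow> (nat \<Rightarrow> nat set) \<Rightarrow> nat" where
  "crossing_number E N F X = Max ((\<lambda>t. cross E N F X t) ` N)"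

definition thickness :: "nat set \<Rightarrow> (nat \<Rightarrow> nat set) \<Rightarrow> nat" where
  "thickness N X = Max ((\<lambda>t. card (X t)) ` N)"

definition ecrw :: "nat \<Rightarrow> nat set \<Rightarrow> nat set set \<Rightarrow> nat" where
  "ecrw \<alpha> V E = (LEAST k. \<exists>N F X. tcd V E N F X \<and> thickness N X \<le> \<alpha> \<and>
                                   crossing_number E N F X \<le> k)"

definition side :: "nat set \<Rightarrow> nat set set \<Rightarrow> nat set \<Rightarrow> nat \<Rightarrow> nat set" where
  "side N F e u = {s. reach (F - {e}) N u s}"

definition adh :: "nat set set \<Rightarrow> nat set \<Rightarrow> nat set set \<Rightarrow> (nat \<Rightarrow> nat set) \<Rightarrow> nat set \<Rightarrow> nat set set" where
  "adh E N F X e = {g\<in>E. \<exists>u v a b. e = {u, v} \<and> g = {a, b} \<and>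
       a \<in> Zset X (side N F e u) \<and> b \<in> Zset X (side N F e v)}"

section \<open>Torsos (multigraphs with loops allowed; edges are 2-element multisets)\<close>

text \<open>Vertices of the torso at t: Inl v for v in X t, Inr C for the consolidated vertex z_C
  of a component C of T - t.\<close>
definition torso_V :: "nat set \<Rightarrow> nat set set \<Rightarrow> (nat \<Rightarrow> nat set) \<Rightarrow> nat \<Rightarrow> (nat + nat set) set" where
  "torso_V N F X t = Inl ` X t \<union> Inr ` comps N F t"

definition tproj :: "nat set \<Rightarrow> nat set set \<Rightarrow> (nat \<Rightarrow> nat set) \<Rightarrow> nat \<Rightarrow> nat \<Rightarrow> nat + nat set" where
  "tproj N F X t v = (if v \<in> X t then Inl v else Inr (THE C. C \<in> comps N F t \<and> v \<in> Zset X C))"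

text \<open>Each edge uv of G becomes the edge between the images of u and v; edges with both ends in
  the same consolidated set Z_i disappear.\<close>
definition torso_E :: "nat set set \<Rightarrow> nat set \<Rightarrow> nat set set \<Rightarrow> (nat \<Rightarrow> nat set) \<Rightarrow> nat \<Rightarrow> (nat + nat set) multiset multiset" where
  "torso_E E N F X t =
     image_mset (\<lambda>e. image_mset (tproj N F X t) (mset_set e))
       (filter_mset (\<lambda>e. card (tproj N F X t ` e) = 2) (mset_set E))"

definition mdeg :: "'v multiset multiset \<Rightarrow> 'v \<Rightarrow> nat" where
  "mdeg M x = sum_mset (image_mset (\<lambda>e. count e x) M)"

text \<open>One suppression step of a vertex x outside the protected set P of degree at most 2:
  delete x with its incident edges, and if x has degree exactly 2 (via two non-loop edges
  to neighbours a, b) add the edge ab.\<close>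
definition suppress_step :: "'v set \<Rightarrow> 'v set \<times> 'v multiset multiset \<Rightarrow> 'v set \<times> 'v multiset multiset \<Rightarrow> bool" where
  "suppress_step P H H' \<longleftrightarrow> (\<exists>x. x \<in> fst H \<and> x \<notin> P \<and> mdeg (snd H) x \<le> 2 \<and>
     (let inc = filter_mset (\<lambda>e. x \<in># e) (snd H);
          rest = filter_mset (\<lambda>e. x \<notin># e) (snd H)
      in H' = (fst H - {x},
               if mdeg (snd H) x = 2 \<and> {#x, x#} \<notin># inc
               then rest + {# sum_mset (image_mset (\<lambda>e. e - {#x#}) inc) #}
               else rest)))"

definition suppress_done :: "'v set \<Rightarrow> 'v set \<times> 'v multiset multiset \<Rightarrow> bool" where
  "suppress_done P H \<longleftrightarrow> (\<forall>x\<in>fst H. x \<notin> P \<longrightarrow> mdeg (snd H) x > 2)"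

text \<open>Number of vertices of the 3-center of the torso at t (maximum over all exhaustive
  suppression orders; the result is order-independent in the paper's setting).\<close>
definition center3_size :: "nat set set \<Rightarrow> nat set \<Rightarrow> nat set set \<Rightarrow> (nat \<Rightarrow> nat set) \<Rightarrow> nat \<Rightarrow> nat" where
  "center3_size E N F X t = Max {card (fst H') | H'.
      (suppress_step (Inl ` X t))\<^sup>*\<^sup>* (torso_V N F X t, torso_E E N F X t) H' \<and>
      suppress_done (Inl ` X t) H'}"

definition center2_size :: "nat set set \<Rightarrow> nat set \<Rightarrow> nat set set \<Rightarrow> (nat \<Rightarrow> nat set) \<Rightarrow> nat \<Rightarrow> nat" where
  "center2_size E N F X t = card (torso_V N F X t -
      {x. x \<notin> Inl ` X t \<and> mdeg (torso_E E N F X t) x = 1})"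

definition tcw_dec :: "nat set set \<Rightarrow> nat set \<Rightarrow> nat set set \<Rightarrow> (nat \<Rightarrow> nat set) \<Rightarrow> nat" where
  "tcw_dec E N F X = Max ((\<lambda>e. card (adh E N F X e)) ` F \<union> (\<lambda>t. center3_size E N F X t) ` N)"

definition stcw_dec :: "nat set set \<Rightarrow> nat set \<Rightarrow> nat set set \<Rightarrow> (nat \<Rightarrow> nat set) \<Rightarrow> nat" where
  "stcw_dec E N F X = Max ((\<lambda>e. card (adh E N F X e)) ` F \<union> (\<lambda>t. center2_size E N F X t) ` N)"

definition tcw :: "nat set \<Rightarrow> nat set set \<Rightarrow> nat" where
  "tcw V E = (LEAST k. \<exists>N F X. tcd V E N F X \<and> tcw_dec E N F X \<le> k)"

definition stcw :: "nat set \<Rightarrow> nat set set \<Rightarrow> nat" where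
  "stcw V E = (LEAST k. \<exists>N F X. tcd V E N F X \<and> stcw_dec E N F X \<le> k)"

end

theory Submission
  imports Defs
begin

text \<open>Let \<open>G\<^sub>n\<close> be the windmill graph: \<open>n\<close> copies of \<open>K\<^sub>4\<close> sharing the vertex 0. Singleton
  bags placed along the tree that hangs the path \<open>3i+1, 3i+2, 3i+3\<close> of every blade below 0
  cross at most two edges at each node, so \<open>ecrw\<^sub>\<alpha>(G\<^sub>n) \<le> 2\<close> whenever \<open>\<alpha> \<ge> 1\<close>.
  Conversely, take any tree-cut decomposition of width \<open>w\<close> and the node \<open>t\<close> whose bag contains 0.
  As 0 is adjacent to every vertex, the adhesion of the tree edge from \<open>t\<close> into a component \<open>C\<close>
  of \<open>T - t\<close> contains an edge to each vertex of \<open>Z\<^sub>C\<close>, so \<open>|Z\<^sub>C| \<le> w\<close>. As every vertex other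
  than 0 has two further neighbours, each nonempty \<open>Z\<^sub>C\<close> becomes a torso vertex of degree at
  least 3, which survives in the 2-center as well as in the 3-center; hence \<open>|X\<^sub>t|\<close> plus the
  number of nonempty \<open>Z\<^sub>C\<close> is at most \<open>w\<close>. Altogether \<open>3n + 1 \<le> w + w\<^sup>2\<close>, so neither width is
  bounded in terms of \<open>ecrw\<^sub>\<alpha>\<close>.\<close>

lemma reach_refl: "a \<in> S \<Longrightarrow> reach F S a a"
  unfolding reach_def by simp

lemma reach_edge: "{a, b} \<in> F \<Longrightarrow> a \<in> S \<Longrightarrow> b \<in> S \<Longrightarrow> reach F S a b"
  unfolding reach_def by auto

lemma reach_trans: "reach F S a b \<Longrightarrow> reach F S b c \<Longrightarrow> reach F S a c"
  unfolding reach_def by (meson rtrancl_trans)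

lemma reach_sym:
  assumes "reach F S a b"
  shows "reach F S b a"
proof -
  let ?R = "{(x, y). {x, y} \<in> F \<and> x \<in> S \<and> y \<in> S}"
  have "?R\<inverse> = ?R" by (auto simp: insert_commute)
  moreover have "(b, a) \<in> (?R\<inverse>)\<^sup>*"
    using assms unfolding reach_def by (simp add: rtrancl_converse)
  ultimately show ?thesis using assms unfolding reach_def by simp
qed

lemma reach_closed:
  assumes "reach F S a b" "a \<in> K" "\<And>x y. {x, y} \<in> F \<Longrightarrow> x \<in> K \<Longrightarrow> y \<in> S \<Longrightarrow> y \<in> K"
  shows "b \<in> K"
proof -
  have "(a, b) \<in> {(x, y). {x, y} \<in> F \<and> x \<in> S \<and> y \<in> S}\<^sup>*"
    using assms(1) unfolding reach_def by blast
  then show ?thesis using assms(2,3) by (induction rule: rtrancl_induct) auto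
qed

lemma reach_delete_edge_at:
  assumes "reach F (N - {t}) a b"
  shows "reach (F - {{t, s}}) N a b"
proof -
  have "{(x, y). {x, y} \<in> F \<and> x \<in> N - {t} \<and> y \<in> N - {t}}
      \<subseteq> {(x, y). {x, y} \<in> F - {{t, s}} \<and> x \<in> N \<and> y \<in> N}"
    by (auto simp: doubleton_eq_iff)
  then show ?thesis using assms unfolding reach_def by (meson Diff_iff rtrancl_mono subsetD)
qed

lemma comps_memE:
  assumes "C \<in> comps N F t"
  obtains c where "c \<in> N - {t}" "C = {s. reach F (N - {t}) c s}"
  using assms unfolding comps_def by auto

lemma comps_subset: "C \<in> comps N F t \<Longrightarrow> C \<subseteq> N - {t}"
  by (elim comps_memE) (auto simp: reach_def)

lemma comps_eq_class:
  assumes "C \<in> comps N F t" "x \<in> C"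
  shows "C = {s. reach F (N - {t}) x s}"
proof -
  obtain c where c: "C = {s. reach F (N - {t}) c s}" using assms(1) by (rule comps_memE)
  then have "reach F (N - {t}) c x" using assms(2) by blast
  then show ?thesis using c by (blast intro: reach_trans reach_sym)
qed

lemma class_in_comps: "x \<in> N - {t} \<Longrightarrow> {s. reach F (N - {t}) x s} \<in> comps N F t"
  unfolding comps_def by blast

lemma comps_disjoint:
  "C1 \<in> comps N F t \<Longrightarrow> C2 \<in> comps N F t \<Longrightarrow> x \<in> C1 \<Longrightarrow> x \<in> C2 \<Longrightarrow> C1 = C2"
  using comps_eq_class by metis

lemma finite_comps: "finite N \<Longrightarrow> finite (comps N F t)"
  using comps_subset by (metis Pow_iff finite_Pow_iff finite_subset subsetI Diff_subset order_trans)

lemma tree_comp_neighbour: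
  assumes tree: "is_tree N F" and t: "t \<in> N" and C: "C \<in> comps N F t"
  shows "\<exists>s\<in>C. {t, s} \<in> F"
proof (rule ccontr)
  assume no_edge: "\<not> ?thesis"
  obtain c where c: "c \<in> N - {t}" "C = {s. reach F (N - {t}) c s}" using C by (rule comps_memE)
  have "reach F N c t" using tree t c(1) unfolding is_tree_def by blast
  then have "t \<in> C"
  proof (rule reach_closed)
    show "c \<in> C" using c by (simp add: reach_refl)
  next
    fix x y assume xy: "{x, y} \<in> F" "x \<in> C" "y \<in> N"
    then have "y \<noteq> t" using no_edge by (auto simp: insert_commute)
    then have "reach F (N - {t}) x y" using xy comps_subset[OF C] by (blast intro: reach_edge)
    then show "y \<in> C" using comps_eq_class[OF C xy(2)] by blast
  qed
  then show False using comps_subset[OF C] by blast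
qed

lemma ugraph_edgeE:
  assumes "ugraph V E" "e \<in> E"
  obtains u v where "e = {u, v}" "u \<noteq> v" "u \<in> V" "v \<in> V"
  using assms unfolding ugraph_def by blast

lemma ugraph_edges_subset: "ugraph V E \<Longrightarrow> E \<subseteq> Pow V"
  by (blast elim: ugraph_edgeE)

lemma ugraph_finite_edges: "ugraph V E \<Longrightarrow> finite E"
  using ugraph_edges_subset unfolding ugraph_def by (meson finite_Pow_iff finite_subset)

lemma tree_edgeE:
  assumes "is_tree N F" "e \<in> F"
  obtains a b where "e = {a, b}" "a \<noteq> b" "a \<in> N" "b \<in> N"
  using assms unfolding is_tree_def by blast

lemma tree_finite_edges: "is_tree N F \<Longrightarrow> finite F"
proof -
  assume tree: "is_tree N F"
  then have "F \<subseteq> Pow N" by (blast elim: tree_edgeE)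
  with tree show "finite F" unfolding is_tree_def by (meson finite_Pow_iff finite_subset)
qed

section \<open>Suppressing vertices of degree at most two\<close>

lemma filter_mset_not_incident:
  assumes "mdeg M x = 0"
  shows "filter_mset (\<lambda>e. x \<notin># e) M = M"
  using assms unfolding mdeg_def by (simp add: filter_mset_eq_conv count_eq_zero_iff)

lemma suppress_steps_keep_core:
  assumes "(suppress_step P)\<^sup>*\<^sup>* (V0, E0) H"
    and "P \<subseteq> S" "S \<subseteq> V0" "\<forall>x\<in>S - P. 3 \<le> mdeg E0 x" "\<forall>x\<in>V0 - S. mdeg E0 x = 0"
  shows "S \<subseteq> fst H \<and> fst H \<subseteq> V0 \<and> snd H = E0"
  using assms(1)
proof (induction rule: rtranclp_induct)
  case base
  then show ?case using assms by simp
next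
  case (step H H')
  obtain x where x: "x \<in> fst H" "x \<notin> P" "mdeg (snd H) x \<le> 2"
    and H': "H' = (fst H - {x},
               if mdeg (snd H) x = 2 \<and> {#x, x#} \<notin># filter_mset (\<lambda>e. x \<in># e) (snd H)
               then filter_mset (\<lambda>e. x \<notin># e) (snd H)
                 + {# sum_mset (image_mset (\<lambda>e. e - {#x#}) (filter_mset (\<lambda>e. x \<in># e) (snd H))) #}
               else filter_mset (\<lambda>e. x \<notin># e) (snd H))"
    using step.hyps(2) unfolding suppress_step_def Let_def by blast
  have E0: "snd H = E0" using step.IH by simp
  have "x \<notin> S"
  proof
    assume "x \<in> S"
    then have "3 \<le> mdeg E0 x" using x(2) assms(4) by blast
    then show False using x(3) E0 by simp
  qed
  then have "mdeg E0 x = 0" using x(1) step.IH assms(5) by auto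
  then have "H' = (fst H - {x}, E0)" using H' E0 by (simp add: filter_mset_not_incident)
  then show ?case using step.IH \<open>x \<notin> S\<close> by auto
qed

lemma suppress_isolated:
  assumes "finite D" "D \<inter> S = {}" "P \<subseteq> S" "\<forall>x\<in>D. mdeg E0 x = 0"
  shows "(suppress_step P)\<^sup>*\<^sup>* (S \<union> D, E0) (S, E0)"
  using assms
proof (induction D rule: finite_induct)
  case empty
  then show ?case by simp
next
  case (insert d D)
  have "mdeg E0 d = 0" "d \<notin> P" "(S \<union> insert d D) - {d} = S \<union> D" using insert by auto
  then have "suppress_step P (S \<union> insert d D, E0) (S \<union> D, E0)"
    unfolding suppress_step_def Let_def by (intro exI[of _ d]) (simp add: filter_mset_not_incident)
  moreover have "(suppress_step P)\<^sup>*\<^sup>* (S \<union> D, E0) (S, E0)" using insert by blast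
  ultimately show ?case by (rule converse_rtranclp_into_rtranclp)
qed

lemma card_le_Max_suppressed:
  assumes "finite V0" "P \<subseteq> S" "S \<subseteq> V0"
    and "\<forall>x\<in>S - P. 3 \<le> mdeg E0 x" "\<forall>x\<in>V0 - S. mdeg E0 x = 0"
  shows "card S \<le> Max {card (fst H) | H. (suppress_step P)\<^sup>*\<^sup>* (V0, E0) H \<and> suppress_done P H}"
proof -
  let ?A = "{card (fst H) | H. (suppress_step P)\<^sup>*\<^sup>* (V0, E0) H \<and> suppress_done P H}"
  have "?A \<subseteq> {..card V0}"
    using suppress_steps_keep_core[OF _ assms(2-5)] assms(1) by (fastforce intro: card_mono)
  then have "finite ?A" by (rule finite_subset) simp
  have "(suppress_step P)\<^sup>*\<^sup>* (S \<union> (V0 - S), E0) (S, E0)"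
    using assms by (intro suppress_isolated) auto
  then have "(suppress_step P)\<^sup>*\<^sup>* (V0, E0) (S, E0)"
    using assms(3) by (simp add: Un_absorb1)
  moreover have "suppress_done P (S, E0)"
    using assms(4) unfolding suppress_done_def by force
  ultimately have "card S \<in> ?A" by force
  with \<open>finite ?A\<close> show ?thesis by (rule Max_ge)
qed

section \<open>Torsos\<close>

locale tcd_node =
  fixes V :: "nat set" and E :: "nat set set" and N :: "nat set" and F :: "nat set set"
    and X :: "nat \<Rightarrow> nat set" and t :: nat
  assumes tcd: "tcd V E N F X" and node: "t \<in> N"
begin

lemma tree: "is_tree N F"
  using tcd unfolding tcd_def by (rule conjunct1)

lemma bag_subset: "s \<in> N \<Longrightarrow> X s \<subseteq> V"
  using tcd unfolding tcd_def by blast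

lemma bags_disjoint: "s \<in> N \<Longrightarrow> s' \<in> N \<Longrightarrow> s \<noteq> s' \<Longrightarrow> X s \<inter> X s' = {}"
  using tcd unfolding tcd_def by blast

lemma Zset_subset: "C \<in> comps N F t \<Longrightarrow> Zset X C \<subseteq> V"
  using comps_subset bag_subset unfolding Zset_def by blast

lemma Zset_disjoint_bag: "C \<in> comps N F t \<Longrightarrow> Zset X C \<inter> X t = {}"
  using comps_subset[of C N F t] node bags_disjoint unfolding Zset_def by blast

lemma Zset_unique:
  assumes "C1 \<in> comps N F t" "C2 \<in> comps N F t" "v \<in> Zset X C1" "v \<in> Zset X C2"
  shows "C1 = C2"
proof -
  obtain s1 s2 where s: "s1 \<in> C1" "s2 \<in> C2" "v \<in> X s1" "v \<in> X s2"
    using assms(3,4) unfolding Zset_def by blast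
  have "s1 \<in> N" "s2 \<in> N" using s(1,2) assms(1,2) comps_subset by blast+
  then have "s1 = s2" using s(3,4) bags_disjoint by blast
  then show ?thesis using comps_disjoint assms(1,2) s(1,2) by metis
qed

lemma vertex_in_bag_or_Zset: "V \<subseteq> X t \<union> (\<Union>C\<in>comps N F t. Zset X C)"
proof
  fix v assume "v \<in> V"
  then obtain s where s: "s \<in> N" "v \<in> X s" using tcd unfolding tcd_def by blast
  show "v \<in> X t \<union> (\<Union>C\<in>comps N F t. Zset X C)"
  proof (cases "s = t")
    case False
    then have "s \<in> {u. reach F (N - {t}) s u}" using s(1) by (simp add: reach_refl)
    then show ?thesis using class_in_comps[of s N t F] False s unfolding Zset_def by blast
  qed (use s in simp)
qed

lemma tproj_bag: "v \<in> X t \<Longrightarrow> tproj N F X t v = Inl v"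
  unfolding tproj_def by simp

lemma tproj_Zset:
  assumes "C \<in> comps N F t" "v \<in> Zset X C"
  shows "tproj N F X t v = Inr C"
proof -
  have "v \<notin> X t" using assms Zset_disjoint_bag by blast
  moreover have "(THE C'. C' \<in> comps N F t \<and> v \<in> Zset X C') = C"
    using assms Zset_unique by (intro the_equality) blast+
  ultimately show ?thesis unfolding tproj_def by simp
qed

lemma tproj_InrD:
  assumes "v \<in> V" "tproj N F X t v = Inr C"
  shows "C \<in> comps N F t \<and> v \<in> Zset X C"
proof -
  have "v \<notin> X t" using assms tproj_bag by fastforce
  then obtain C' where "C' \<in> comps N F t" "v \<in> Zset X C'"
    using vertex_in_bag_or_Zset assms(1) by blast
  then show ?thesis using tproj_Zset assms(2) by auto
qed

end

lemma mdeg_torso_E: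
  assumes "finite E"
  shows "mdeg (torso_E E N F X t) x =
    (\<Sum>e\<in>{e\<in>E. card (tproj N F X t ` e) = 2}. count (image_mset (tproj N F X t) (mset_set e)) x)"
  unfolding mdeg_def torso_E_def using assms
  by (simp add: multiset.map_comp o_def sum_unfold_sum_mset)

lemma card_incident_le_mdeg_torso_E:
  assumes "finite E" "\<forall>e\<in>E. finite e"
  shows "card {e\<in>E. card (tproj N F X t ` e) = 2 \<and> x \<in> tproj N F X t ` e}
    \<le> mdeg (torso_E E N F X t) x"
proof -
  let ?p = "tproj N F X t"
  let ?A = "{e\<in>E. card (?p ` e) = 2}"
  let ?B = "{e\<in>E. card (?p ` e) = 2 \<and> x \<in> ?p ` e}"
  have "card ?B = (\<Sum>e\<in>?B. 1)" by simp
  also have "\<dots> \<le> (\<Sum>e\<in>?B. count (image_mset ?p (mset_set e)) x)"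
    using assms(2) by (intro sum_mono) (auto simp: Suc_le_eq)
  also have "\<dots> \<le> (\<Sum>e\<in>?A. count (image_mset ?p (mset_set e)) x)"
    using assms(1) by (intro sum_mono2) auto
  finally show ?thesis using mdeg_torso_E[OF assms(1)] by simp
qed

lemma mdeg_torso_E_eq_0:
  assumes "finite E" "\<forall>e\<in>E. finite e" "\<forall>e\<in>E. x \<notin> tproj N F X t ` e"
  shows "mdeg (torso_E E N F X t) x = 0"
  unfolding mdeg_torso_E[OF assms(1)] using assms
  by (auto intro!: sum.neutral simp: count_eq_zero_iff)

section \<open>Graphs with a universal vertex\<close>

definition hub_graph :: "nat set \<Rightarrow> nat set set \<Rightarrow> bool" where
  "hub_graph V E \<longleftrightarrow> ugraph V E \<and> 0 \<in> V \<and> (\<forall>z\<in>V - {0}. {0, z} \<in> E) \<and>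
    (\<forall>y\<in>V - {0}. \<exists>y' y''. y' \<in> V - {0} \<and> y'' \<in> V - {0} \<and> y' \<noteq> y'' \<and> y' \<noteq> y \<and> y'' \<noteq> y \<and>
      {y, y'} \<in> E \<and> {y, y''} \<in> E)"

locale hub_tcd_node = tcd_node +
  assumes hub: "hub_graph V E" and hub_in_bag: "0 \<in> X t"
begin

definition occupied_comps :: "nat set set" where
  "occupied_comps = {C \<in> comps N F t. Zset X C \<noteq> {}}"

definition torso_core :: "(nat + nat set) set" where
  "torso_core = Inl ` X t \<union> Inr ` occupied_comps"

lemma ugraph: "ugraph V E"
  using hub unfolding hub_graph_def by blast

lemma finite_V: "finite V"
  using ugraph unfolding ugraph_def by blast

lemma finite_E: "finite E"
  using ugraph by (rule ugraph_finite_edges)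

lemma finite_edge: "\<forall>e\<in>E. finite e"
  using ugraph unfolding ugraph_def by fastforce

lemma edge_subset: "\<forall>e\<in>E. e \<subseteq> V"
  using ugraph_edges_subset[OF ugraph] by blast

lemma finite_N: "finite N"
  using tree unfolding is_tree_def by blast

lemma finite_occupied_comps: "finite occupied_comps"
  unfolding occupied_comps_def using finite_comps[OF finite_N] by simp

lemma hub_edge: "z \<in> V \<Longrightarrow> z \<noteq> 0 \<Longrightarrow> {0, z} \<in> E"
  using hub unfolding hub_graph_def by blast

lemma hub_two_neighbours:
  assumes "y \<in> V - {0}"
  obtains y' y'' where "y' \<in> V - {0}" "y'' \<in> V - {0}" "y' \<noteq> y''" "y' \<noteq> y" "y'' \<noteq> y"
    "{y, y'} \<in> E" "{y, y''} \<in> E"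
  using bspec[OF hub[unfolded hub_graph_def, THEN conjunct2, THEN conjunct2, THEN conjunct2] assms]
  by blast

lemma hub_notin_Zset: "C \<in> comps N F t \<Longrightarrow> 0 \<notin> Zset X C"
  using Zset_disjoint_bag hub_in_bag by blast

lemma torso_edge_at_comp:
  assumes C: "C \<in> comps N F t" and "{a, b} \<in> E" "a \<in> Zset X C" "b \<in> V" "b \<notin> Zset X C"
  shows "{a, b} \<in> {e\<in>E. card (tproj N F X t ` e) = 2 \<and> Inr C \<in> tproj N F X t ` e}"
proof -
  have "tproj N F X t a = Inr C" using tproj_Zset[OF C] assms(3) .
  moreover have "tproj N F X t b \<noteq> Inr C" using tproj_InrD assms(4,5) by blast
  ultimately show ?thesis using assms(2) by (simp add: card_insert_if)
qed

text \<open>The three torso edges at \<open>z\<^sub>C\<close> come from \<open>0y\<close> and, for each further neighbour \<open>z\<close> of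
  some \<open>y \<in> Z\<^sub>C\<close>, from \<open>yz\<close> if \<open>z \<notin> Z\<^sub>C\<close> and from \<open>0z\<close> otherwise.\<close>

lemma mdeg_occupied_ge_3:
  assumes C: "C \<in> comps N F t" and y: "y \<in> Zset X C"
  shows "3 \<le> mdeg (torso_E E N F X t) (Inr C)"
proof -
  let ?D = "{e\<in>E. card (tproj N F X t ` e) = 2 \<and> Inr C \<in> tproj N F X t ` e}"
  have in_V: "a \<in> V" and nonzero: "a \<noteq> 0" if "a \<in> Zset X C" for a
    using that Zset_subset[OF C] hub_notin_Zset[OF C] by (blast, metis)
  have "y \<in> V - {0}" using in_V[OF y] nonzero[OF y] by blast
  then obtain y' y'' where y': "y' \<in> V - {0}" "y'' \<in> V - {0}" "y' \<noteq> y''" "y' \<noteq> y" "y'' \<noteq> y"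
      "{y, y'} \<in> E" "{y, y''} \<in> E"
    by (rule hub_two_neighbours)
  have "0 \<in> V" using hub unfolding hub_graph_def by blast
  have to_hub: "{a, 0} \<in> ?D" if "a \<in> Zset X C" for a
  proof (rule torso_edge_at_comp[OF C _ that \<open>0 \<in> V\<close>])
    show "{a, 0} \<in> E" using hub_edge[OF in_V[OF that] nonzero[OF that]] by (simp add: insert_commute)
    show "0 \<notin> Zset X C" using hub_notin_Zset[OF C] .
  qed
  define edge where "edge z = (if z \<in> Zset X C then {z, 0} else {y, z})" for z
  have edge: "edge z \<in> ?D" if "z \<in> V" "{y, z} \<in> E" for z
  proof (cases "z \<in> Zset X C")
    case True
    then show ?thesis using to_hub unfolding edge_def by simp
  next
    case False
    then show ?thesis using torso_edge_at_comp[OF C that(2) y that(1)] unfolding edge_def by simp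
  qed
  have "{y, 0} \<noteq> edge z" if "z \<noteq> y" "z \<noteq> 0" for z
    using that unfolding edge_def by (auto simp: doubleton_eq_iff)
  moreover have "edge y' \<noteq> edge y''"
    using y' nonzero[OF y] unfolding edge_def by (auto simp: doubleton_eq_iff)
  ultimately have "card {{y, 0}, edge y', edge y''} = 3"
    using y' by (simp add: card_insert_if)
  moreover have "card {{y, 0}, edge y', edge y''} \<le> card ?D"
  proof (rule card_mono)
    show "finite ?D" using finite_E by simp
    show "{{y, 0}, edge y', edge y''} \<subseteq> ?D" using to_hub[OF y] edge y' by blast
  qed
  ultimately have "3 \<le> card ?D" by simp
  also have "\<dots> \<le> mdeg (torso_E E N F X t) (Inr C)"
    by (rule card_incident_le_mdeg_torso_E[OF finite_E finite_edge])
  finally show ?thesis .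
qed

lemma mdeg_unoccupied_eq_0:
  assumes "Zset X C = {}"
  shows "mdeg (torso_E E N F X t) (Inr C) = 0"
proof (rule mdeg_torso_E_eq_0[OF finite_E finite_edge], intro ballI notI)
  fix e assume "e \<in> E" "Inr C \<in> tproj N F X t ` e"
  then obtain v where "v \<in> e" "tproj N F X t v = Inr C" by auto
  moreover have "v \<in> V" using edge_subset \<open>e \<in> E\<close> \<open>v \<in> e\<close> by blast
  ultimately have "v \<in> Zset X C" using tproj_InrD by blast
  then show False using assms by simp
qed

lemma card_torso_core: "card torso_core = card (X t) + card occupied_comps"
proof -
  have "finite (X t)" using bag_subset[OF node] finite_V by (rule finite_subset)
  then show ?thesis unfolding torso_core_def using finite_occupied_comps
    by (subst card_Un_disjoint) (auto simp: card_image)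
qed

lemma finite_torso_V: "finite (torso_V N F X t)"
  unfolding torso_V_def using bag_subset[OF node] finite_V finite_comps[OF finite_N]
  by (meson finite_Un finite_imageI finite_subset)

lemma torso_core_subset: "torso_core \<subseteq> torso_V N F X t"
  unfolding torso_core_def torso_V_def occupied_comps_def by blast

lemma mdeg_torso_core_ge_3:
  "\<forall>x\<in>torso_core - Inl ` X t. 3 \<le> mdeg (torso_E E N F X t) x"
proof
  fix x assume "x \<in> torso_core - Inl ` X t"
  then obtain C where x: "x = Inr C" and "C \<in> occupied_comps" unfolding torso_core_def by blast
  then obtain y where "C \<in> comps N F t" "y \<in> Zset X C" unfolding occupied_comps_def by blast
  then show "3 \<le> mdeg (torso_E E N F X t) x" unfolding x by (rule mdeg_occupied_ge_3)
qed

lemma mdeg_outside_torso_core: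
  "\<forall>x\<in>torso_V N F X t - torso_core. mdeg (torso_E E N F X t) x = 0"
proof
  fix x assume "x \<in> torso_V N F X t - torso_core"
  then obtain C where x: "x = Inr C" and "C \<in> comps N F t" "C \<notin> occupied_comps"
    unfolding torso_core_def torso_V_def by blast
  then have "Zset X C = {}" unfolding occupied_comps_def by blast
  then show "mdeg (torso_E E N F X t) x = 0" unfolding x by (rule mdeg_unoccupied_eq_0)
qed

lemma card_torso_core_le_center3: "card torso_core \<le> center3_size E N F X t"
  unfolding center3_size_def
proof (rule card_le_Max_suppressed[OF finite_torso_V _ torso_core_subset
      mdeg_torso_core_ge_3 mdeg_outside_torso_core])
  show "Inl ` X t \<subseteq> torso_core" unfolding torso_core_def by blast
qed

lemma card_torso_core_le_center2: "card torso_core \<le> center2_size E N F X t"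
  unfolding center2_size_def
proof (rule card_mono)
  show "finite (torso_V N F X t - {x. x \<notin> Inl ` X t \<and> mdeg (torso_E E N F X t) x = 1})"
    using finite_torso_V by simp
  show "torso_core \<subseteq> torso_V N F X t - {x. x \<notin> Inl ` X t \<and> mdeg (torso_E E N F X t) x = 1}"
  proof
    fix x assume x: "x \<in> torso_core"
    have "mdeg (torso_E E N F X t) x \<noteq> 1" if "x \<notin> Inl ` X t"
    proof -
      have "3 \<le> mdeg (torso_E E N F X t) x" using mdeg_torso_core_ge_3 x that by blast
      then show ?thesis by simp
    qed
    then show "x \<in> torso_V N F X t - {x. x \<notin> Inl ` X t \<and> mdeg (torso_E E N F X t) x = 1}"
      using torso_core_subset x by blast
  qed
qed

lemma card_Zset_le_adh:
  assumes C: "C \<in> comps N F t"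
  shows "\<exists>e\<in>F. card (Zset X C) \<le> card (adh E N F X e)"
proof -
  obtain s where s: "s \<in> C" "{t, s} \<in> F" using tree_comp_neighbour[OF tree node C] by blast
  let ?e = "{t, s}"
  have "t \<in> side N F ?e t" unfolding side_def using node by (simp add: reach_refl)
  then have hub_side: "0 \<in> Zset X (side N F ?e t)" using hub_in_bag unfolding Zset_def by blast
  have "{0, y} \<in> adh E N F X ?e" if y: "y \<in> Zset X C" for y
  proof -
    obtain s' where s': "s' \<in> C" "y \<in> X s'" using y unfolding Zset_def by blast
    have "reach F (N - {t}) s s'" using comps_eq_class[OF C s(1)] s'(1) by blast
    then have "s' \<in> side N F ?e s" unfolding side_def by (simp add: reach_delete_edge_at)
    then have y_side: "y \<in> Zset X (side N F ?e s)" using s' unfolding Zset_def by blast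
    have "y \<noteq> 0" using hub_notin_Zset[OF C] y by metis
    then have "{0, y} \<in> E" using Zset_subset[OF C] y hub_edge by blast
    moreover have "\<exists>u v a b. ?e = {u, v} \<and> {0, y} = {a, b} \<and>
        a \<in> Zset X (side N F ?e u) \<and> b \<in> Zset X (side N F ?e v)"
      using hub_side y_side by blast
    ultimately show ?thesis unfolding adh_def by blast
  qed
  then have "(\<lambda>y. {0, y}) ` Zset X C \<subseteq> adh E N F X ?e" by blast
  moreover have "finite (adh E N F X ?e)" using finite_E unfolding adh_def by simp
  ultimately have "card ((\<lambda>y. {0, y}) ` Zset X C) \<le> card (adh E N F X ?e)"
    by (intro card_mono)
  moreover have "inj_on (\<lambda>y. {0::nat, y}) (Zset X C)" by (auto simp: inj_on_def doubleton_eq_iff)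
  ultimately show ?thesis using s(2) by (auto simp: card_image)
qed

lemma card_V_le:
  assumes adh: "\<forall>e\<in>F. card (adh E N F X e) \<le> w" and core: "card torso_core \<le> w"
  shows "card V \<le> w + w * w"
proof -
  have Z: "finite (Zset X C) \<and> card (Zset X C) \<le> w" if "C \<in> occupied_comps" for C
  proof
    have C: "C \<in> comps N F t" using that unfolding occupied_comps_def by blast
    show "finite (Zset X C)" using Zset_subset[OF C] finite_V by (rule finite_subset)
    obtain e where "e \<in> F" "card (Zset X C) \<le> card (adh E N F X e)"
      using card_Zset_le_adh[OF C] by blast
    then show "card (Zset X C) \<le> w" using adh by fastforce
  qed
  have "V \<subseteq> X t \<union> (\<Union>C\<in>occupied_comps. Zset X C)"
    using vertex_in_bag_or_Zset unfolding occupied_comps_def by blast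
  moreover have "finite (X t \<union> (\<Union>C\<in>occupied_comps. Zset X C))"
    using finite_subset[OF bag_subset[OF node] finite_V] finite_occupied_comps Z by blast
  ultimately have "card V \<le> card (X t \<union> (\<Union>C\<in>occupied_comps. Zset X C))"
    by (rule card_mono[rotated])
  also have "\<dots> \<le> card (X t) + card (\<Union>C\<in>occupied_comps. Zset X C)"
    by (rule card_Un_le)
  also have "card (\<Union>C\<in>occupied_comps. Zset X C) \<le> (\<Sum>C\<in>occupied_comps. card (Zset X C))"
    using finite_occupied_comps by (rule card_UN_le)
  also have "\<dots> \<le> card occupied_comps * w"
    using Z sum_bounded_above[of occupied_comps "\<lambda>C. card (Zset X C)" w] by simp
  also have "\<dots> \<le> w * w"
    using core card_torso_core by simp
  finally show ?thesis using core card_torso_core by linarith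
qed

end

lemma card_le_width_dec:
  assumes "hub_graph V E" "tcd V E N F X"
  shows "card V \<le> stcw_dec E N F X + stcw_dec E N F X * stcw_dec E N F X"
    and "card V \<le> tcw_dec E N F X + tcw_dec E N F X * tcw_dec E N F X"
proof -
  have "0 \<in> V" using assms(1) unfolding hub_graph_def by blast
  then obtain t where "t \<in> N" "0 \<in> X t" using assms(2) unfolding tcd_def by blast
  then interpret hub_tcd_node V E N F X t
    using assms by unfold_locales
  have fin: "finite N" "finite F" using finite_N tree_finite_edges[OF tree] .
  show "card V \<le> stcw_dec E N F X + stcw_dec E N F X * stcw_dec E N F X"
  proof (rule card_V_le)
    show "\<forall>e\<in>F. card (adh E N F X e) \<le> stcw_dec E N F X"
      unfolding stcw_dec_def using fin by (simp add: Max_ge)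
    have "center2_size E N F X t \<le> stcw_dec E N F X"
      unfolding stcw_dec_def using fin node by (simp add: Max_ge)
    then show "card torso_core \<le> stcw_dec E N F X"
      using card_torso_core_le_center2 by linarith
  qed
  show "card V \<le> tcw_dec E N F X + tcw_dec E N F X * tcw_dec E N F X"
  proof (rule card_V_le)
    show "\<forall>e\<in>F. card (adh E N F X e) \<le> tcw_dec E N F X"
      unfolding tcw_dec_def using fin by (simp add: Max_ge)
    have "center3_size E N F X t \<le> tcw_dec E N F X"
      unfolding tcw_dec_def using fin node by (simp add: Max_ge)
    then show "card torso_core \<le> tcw_dec E N F X"
      using card_torso_core_le_center3 by linarith
  qed
qed

lemma tcd_single_bag: "tcd V E {0} {} (\<lambda>_. V)"
  unfolding tcd_def is_tree_def by (simp add: reach_refl)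

lemma card_le_width:
  assumes "hub_graph V E"
  shows "card V \<le> stcw V E + stcw V E * stcw V E"
    and "card V \<le> tcw V E + tcw V E * tcw V E"
proof -
  have "\<exists>N F X. tcd V E N F X \<and> stcw_dec E N F X \<le> stcw V E"
    unfolding stcw_def by (rule LeastI_ex, intro exI conjI, rule tcd_single_bag, rule le_refl)
  then obtain N F X where "tcd V E N F X" "stcw_dec E N F X \<le> stcw V E" by blast
  with card_le_width_dec(1)[OF assms] show "card V \<le> stcw V E + stcw V E * stcw V E"
    by (meson add_le_mono mult_le_mono order_trans)
  have "\<exists>N F X. tcd V E N F X \<and> tcw_dec E N F X \<le> tcw V E"
    unfolding tcw_def by (rule LeastI_ex, intro exI conjI, rule tcd_single_bag, rule le_refl)
  then obtain N F X where "tcd V E N F X" "tcw_dec E N F X \<le> tcw V E" by blast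
  with card_le_width_dec(2)[OF assms] show "card V \<le> tcw V E + tcw V E * tcw V E"
    by (meson add_le_mono mult_le_mono order_trans)
qed

section \<open>The windmill graphs\<close>

text \<open>Vertex 0 together with the triangle \<open>3i+1, 3i+2, 3i+3\<close> forms the \<open>i\<close>-th blade, a \<open>K\<^sub>4\<close>.\<close>

definition windmill_V :: "nat \<Rightarrow> nat set" where
  "windmill_V n = {0..3 * n}"

definition windmill_E :: "nat \<Rightarrow> nat set set" where
  "windmill_E n = {{0, v} | v. v \<in> {1..3 * n}} \<union> {{3 * i + 1, 3 * i + 2} | i. i < n}
     \<union> {{3 * i + 2, 3 * i + 3} | i. i < n} \<union> {{3 * i + 1, 3 * i + 3} | i. i < n}"

definition windmill_tree :: "nat \<Rightarrow> nat set set" where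
  "windmill_tree n = {{0, 3 * i + 1} | i. i < n} \<union> {{3 * i + 1, 3 * i + 2} | i. i < n}
     \<union> {{3 * i + 2, 3 * i + 3} | i. i < n}"

lemma card_windmill_V: "card (windmill_V n) = 3 * n + 1"
  unfolding windmill_V_def by simp

lemma windmill_V_blade: "i < n \<Longrightarrow> {0, 3 * i + 1, 3 * i + 2, 3 * i + 3} \<subseteq> windmill_V n"
  unfolding windmill_V_def by auto

lemma windmill_blade_cases:
  fixes v n :: nat
  assumes "v \<in> {1..3 * n}"
  obtains i where "i < n" "v = 3 * i + 1 \<or> v = 3 * i + 2 \<or> v = 3 * i + 3"
proof
  let ?i = "(v - 1) div 3"
  show "?i < n" using assms by auto
  have "1 \<le> v" using assms by simp
  then show "v = 3 * ?i + 1 \<or> v = 3 * ?i + 2 \<or> v = 3 * ?i + 3" by presburger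
qed

lemma windmill_tree_blade:
  assumes "i < n"
  shows "{0, 3 * i + 1} \<in> windmill_tree n" "{3 * i + 1, 3 * i + 2} \<in> windmill_tree n"
    "{3 * i + 2, 3 * i + 3} \<in> windmill_tree n"
  unfolding windmill_tree_def using assms by blast+

lemma windmill_tree_edgeE:
  assumes "e \<in> windmill_tree n"
  obtains i where "i < n" "e = {0, 3 * i + 1} \<or> e = {3 * i + 1, 3 * i + 2} \<or> e = {3 * i + 2, 3 * i + 3}"
  using assms unfolding windmill_tree_def by blast

lemma windmill_tree_edge_at_blade:
  assumes "{x, y} \<in> windmill_tree n" "x \<in> {3 * i + 1..3 * i + 3}"
  shows "{x, y} = {0, 3 * i + 1} \<or> {x, y} = {3 * i + 1, 3 * i + 2} \<or> {x, y} = {3 * i + 2, 3 * i + 3}"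
proof -
  obtain j where j: "j < n"
    "{x, y} = {0, 3 * j + 1} \<or> {x, y} = {3 * j + 1, 3 * j + 2} \<or> {x, y} = {3 * j + 2, 3 * j + 3}"
    using assms(1) by (rule windmill_tree_edgeE)
  have "x \<in> {x, y}" by simp
  with j(2) have "x \<in> {0, 3 * j + 1, 3 * j + 2, 3 * j + 3}" by (elim disjE) auto
  with assms(2) have "3 * j + 1 \<le> x" "x \<le> 3 * j + 3" "3 * i + 1 \<le> x" "x \<le> 3 * i + 3" by auto
  then have "j = i" by presburger
  then show ?thesis using j(2) by simp
qed

lemma reach_windmill_root:
  assumes "v \<in> windmill_V n"
  shows "reach (windmill_tree n) (windmill_V n) 0 v"
proof (cases "v = 0")
  case True
  then show ?thesis using assms by (simp add: reach_refl)
next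
  case False
  then have "v \<in> {1..3 * n}" using assms unfolding windmill_V_def by auto
  then obtain i where i: "i < n" "v = 3 * i + 1 \<or> v = 3 * i + 2 \<or> v = 3 * i + 3"
    by (rule windmill_blade_cases)
  let ?reach = "reach (windmill_tree n) (windmill_V n)"
  have "?reach 0 (3 * i + 1)" "?reach (3 * i + 1) (3 * i + 2)" "?reach (3 * i + 2) (3 * i + 3)"
    using windmill_tree_blade[OF i(1)] windmill_V_blade[OF i(1)] by (auto intro: reach_edge)
  with i(2) show ?thesis by (blast intro: reach_trans)
qed

lemma windmill_tree_bridge:
  assumes "i < n"
    and "e = {0, 3 * i + 1} \<and> m = 3 * i + 1 \<or> e = {3 * i + 1, 3 * i + 2} \<and> m = 3 * i + 2
      \<or> e = {3 * i + 2, 3 * i + 3} \<and> m = 3 * i + 3"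
  shows "\<not> reach (windmill_tree n - {e}) (windmill_V n) m 0"
proof
  assume "reach (windmill_tree n - {e}) (windmill_V n) m 0"
  then have "0 \<in> {m..3 * i + 3}"
  proof (rule reach_closed)
    show "m \<in> {m..3 * i + 3}" using assms(2) by auto
  next
    fix x y assume xy: "{x, y} \<in> windmill_tree n - {e}" and x: "x \<in> {m..3 * i + 3}"
    have "{x, y} \<in> windmill_tree n" using xy by simp
    moreover have "x \<in> {3 * i + 1..3 * i + 3}" using x assms(2) by auto
    ultimately have "{x, y} = {0, 3 * i + 1} \<or> {x, y} = {3 * i + 1, 3 * i + 2} \<or> {x, y} = {3 * i + 2, 3 * i + 3}"
      by (rule windmill_tree_edge_at_blade)
    then show "y \<in> {m..3 * i + 3}"
      using assms(2) xy x by (auto simp: doubleton_eq_iff)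
  qed
  then show False using assms(2) by auto
qed

lemma is_tree_windmill_tree: "is_tree (windmill_V n) (windmill_tree n)"
  unfolding is_tree_def
proof (intro conjI ballI)
  show "finite (windmill_V n)" "windmill_V n \<noteq> {}" unfolding windmill_V_def by auto
next
  fix e assume "e \<in> windmill_tree n"
  then obtain i where i: "i < n"
    and e: "e = {0, 3 * i + 1} \<or> e = {3 * i + 1, 3 * i + 2} \<or> e = {3 * i + 2, 3 * i + 3}"
    by (rule windmill_tree_edgeE)
  have blade: "{0, 3 * i + 1, 3 * i + 2, 3 * i + 3} \<subseteq> windmill_V n" using windmill_V_blade[OF i] .
  have edge: "\<exists>a b. {u, v} = {a, b} \<and> a \<noteq> b \<and> a \<in> windmill_V n \<and> b \<in> windmill_V n"
    if "u \<noteq> v" "u \<in> windmill_V n" "v \<in> windmill_V n" for u v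
    using that by blast
  from e show "\<exists>a b. e = {a, b} \<and> a \<noteq> b \<and> a \<in> windmill_V n \<and> b \<in> windmill_V n"
    using blade by (elim disjE) (simp_all add: edge)
  from e obtain m where "e = {0, 3 * i + 1} \<and> m = 3 * i + 1 \<or> e = {3 * i + 1, 3 * i + 2} \<and> m = 3 * i + 2
      \<or> e = {3 * i + 2, 3 * i + 3} \<and> m = 3 * i + 3"
    by blast
  with i have "\<not> reach (windmill_tree n - {e}) (windmill_V n) m 0" by (rule windmill_tree_bridge)
  moreover have "m \<in> windmill_V n" "0 \<in> windmill_V n" using blade \<open>e = _ \<and> m = _ \<or> _\<close> by auto
  ultimately show "\<exists>a\<in>windmill_V n. \<exists>b\<in>windmill_V n. \<not> reach (windmill_tree n - {e}) (windmill_V n) a b"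
    by blast
next
  fix a b assume "a \<in> windmill_V n" "b \<in> windmill_V n"
  then show "reach (windmill_tree n) (windmill_V n) a b"
    by (blast intro: reach_trans reach_sym reach_windmill_root)
qed

lemma hub_graph_windmill: "hub_graph (windmill_V n) (windmill_E n)"
  unfolding hub_graph_def
proof (intro conjI ballI)
  show "ugraph (windmill_V n) (windmill_E n)" unfolding ugraph_def
  proof (intro conjI ballI)
    show "finite (windmill_V n)" unfolding windmill_V_def by simp
  next
    fix e assume "e \<in> windmill_E n"
    then consider (hub) v where "v \<in> {1..3 * n}" "e = {0, v}"
      | (blade) i u w where "i < n" "e = {u, w}" "u < w" "{u, w} \<subseteq> {3 * i + 1, 3 * i + 2, 3 * i + 3}"
      unfolding windmill_E_def by fastforce
    then show "\<exists>u v. e = {u, v} \<and> u \<noteq> v \<and> u \<in> windmill_V n \<and> v \<in> windmill_V n"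
    proof cases
      case (hub v)
      then show ?thesis unfolding windmill_V_def by (intro exI[of _ 0] exI[of _ v]) auto
    next
      case (blade i u w)
      then show ?thesis using windmill_V_blade[OF blade(1)] by (intro exI[of _ u] exI[of _ w]) auto
    qed
  qed
next
  show "0 \<in> windmill_V n" unfolding windmill_V_def by simp
next
  fix z assume "z \<in> windmill_V n - {0}"
  then show "{0, z} \<in> windmill_E n" unfolding windmill_V_def windmill_E_def by auto
next
  fix y assume "y \<in> windmill_V n - {0}"
  then have "y \<in> {1..3 * n}" unfolding windmill_V_def by auto
  then obtain i where i: "i < n" "y = 3 * i + 1 \<or> y = 3 * i + 2 \<or> y = 3 * i + 3"
    by (rule windmill_blade_cases)
  let ?T = "{3 * i + 1, 3 * i + 2, 3 * i + 3}"
  have T: "?T \<subseteq> windmill_V n - {0}" using windmill_V_blade[OF i(1)] by auto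
  have "{3 * i + 1, 3 * i + 2} \<in> windmill_E n" "{3 * i + 2, 3 * i + 3} \<in> windmill_E n"
      "{3 * i + 1, 3 * i + 3} \<in> windmill_E n"
    unfolding windmill_E_def using i(1) by blast+
  then have triangle: "{a, b} \<in> windmill_E n" if "a \<in> ?T" "b \<in> ?T" "a \<noteq> b" for a b
    using that by (auto simp: insert_commute)
  have witnesses: "\<exists>y' y''. y' \<in> windmill_V n - {0} \<and> y'' \<in> windmill_V n - {0} \<and> y' \<noteq> y'' \<and>
      y' \<noteq> y \<and> y'' \<noteq> y \<and> {y, y'} \<in> windmill_E n \<and> {y, y''} \<in> windmill_E n"
    if "y \<in> ?T" "y' \<in> ?T" "y'' \<in> ?T" "y' \<noteq> y''" "y' \<noteq> y" "y'' \<noteq> y" for y' y''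
    using that T by (intro exI[of _ y'] exI[of _ y''] conjI triangle) auto
  from i(2) show "\<exists>y' y''. y' \<in> windmill_V n - {0} \<and> y'' \<in> windmill_V n - {0} \<and> y' \<noteq> y'' \<and>
      y' \<noteq> y \<and> y'' \<noteq> y \<and> {y, y'} \<in> windmill_E n \<and> {y, y''} \<in> windmill_E n"
  proof (elim disjE)
    assume "y = 3 * i + 1"
    then show ?thesis by (intro witnesses[of "3 * i + 2" "3 * i + 3"]) auto
  next
    assume "y = 3 * i + 2"
    then show ?thesis by (intro witnesses[of "3 * i + 1" "3 * i + 3"]) auto
  next
    assume "y = 3 * i + 3"
    then show ?thesis by (intro witnesses[of "3 * i + 1" "3 * i + 2"]) auto
  qed
qed

text \<open>Below node \<open>3i+1\<close> of the windmill tree hang \<open>3i+2, 3i+3\<close>, below \<open>3i+2\<close> hangs \<open>3i+3\<close>;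
  these are the edges leaving such a subtree without passing through its root.\<close>

definition windmill_crossing_edges :: "nat \<Rightarrow> nat set set" where
  "windmill_crossing_edges t =
     (if t mod 3 = 1 then {{0, t + 1}, {0, t + 2}}
      else if t mod 3 = 2 then {{0, t + 1}, {t - 1, t + 1}} else {})"

lemma windmill_crossing_edges_blade:
  "windmill_crossing_edges (3 * i + 1) = {{0, 3 * i + 2}, {0, 3 * i + 3}}"
  "windmill_crossing_edges (3 * i + 2) = {{0, 3 * i + 3}, {3 * i + 1, 3 * i + 3}}"
proof -
  have mod3: "(3 * i + 1) mod 3 = 1" "(3 * i + 2) mod 3 = (2::nat)" by presburger+
  have sums: "3 * i + 1 + 1 = 3 * i + 2" "3 * i + 1 + 2 = 3 * i + 3" "3 * i + 2 + 1 = 3 * i + 3"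
    "3 * i + 2 - 1 = 3 * i + (1::nat)" by simp_all
  have "windmill_crossing_edges (3 * i + 1) = {{0, 3 * i + 1 + 1}, {0, 3 * i + 1 + 2}}"
    "windmill_crossing_edges (3 * i + 2) = {{0, 3 * i + 2 + 1}, {3 * i + 2 - 1, 3 * i + 2 + 1}}"
    unfolding windmill_crossing_edges_def using mod3 by simp_all
  then show "windmill_crossing_edges (3 * i + 1) = {{0, 3 * i + 2}, {0, 3 * i + 3}}"
    "windmill_crossing_edges (3 * i + 2) = {{0, 3 * i + 3}, {3 * i + 1, 3 * i + 3}}"
    by (simp_all only: sums)
qed

lemma card_windmill_crossing_edges: "card (windmill_crossing_edges t) \<le> 2"
  unfolding windmill_crossing_edges_def by (auto simp: card_insert_if)

lemma windmill_edge_reach: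
  assumes e: "e \<in> windmill_E n" and "t \<notin> e" and "e \<notin> windmill_crossing_edges t"
  shows "\<exists>a b. e = {a, b} \<and> reach (windmill_tree n) (windmill_V n - {t}) a b"
proof -
  let ?reach = "reach (windmill_tree n) (windmill_V n - {t})"
  have step: "?reach a b" if "{a, b} \<in> windmill_tree n" "{a, b} \<subseteq> windmill_V n" "t \<notin> {a, b}" for a b
    using that by (intro reach_edge) auto
  have to_blade: "?reach 0 (3 * i + 1)" if "i < n" "t \<notin> {0, 3 * i + 1}" for i
    using that windmill_tree_blade(1)[OF that(1)] windmill_V_blade[OF that(1)] by (intro step) auto
  have down1: "?reach (3 * i + 1) (3 * i + 2)" if "i < n" "t \<notin> {3 * i + 1, 3 * i + 2}" for i
    using that windmill_tree_blade(2)[OF that(1)] windmill_V_blade[OF that(1)] by (intro step) auto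
  have down2: "?reach (3 * i + 2) (3 * i + 3)" if "i < n" "t \<notin> {3 * i + 2, 3 * i + 3}" for i
    using that windmill_tree_blade(3)[OF that(1)] windmill_V_blade[OF that(1)] by (intro step) auto
  consider (hub) v where "v \<in> {1..3 * n}" "e = {0, v}"
    | (edge12) i where "i < n" "e = {3 * i + 1, 3 * i + 2}"
    | (edge23) i where "i < n" "e = {3 * i + 2, 3 * i + 3}"
    | (edge13) i where "i < n" "e = {3 * i + 1, 3 * i + 3}"
    using e unfolding windmill_E_def by blast
  then show ?thesis
  proof cases
    case (hub v)
    obtain i where i: "i < n" "v = 3 * i + 1 \<or> v = 3 * i + 2 \<or> v = 3 * i + 3"
      using hub(1) by (rule windmill_blade_cases)
    have "t \<noteq> 0" "t \<noteq> v" using assms(2) hub(2) by auto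
    have not1: "t \<noteq> 3 * i + 1" if "v \<noteq> 3 * i + 1"
      using assms(3) hub(2) i(2) that windmill_crossing_edges_blade(1)[of i] by auto
    have not2: "t \<noteq> 3 * i + 2" if "v = 3 * i + 3"
      using assms(3) hub(2) that windmill_crossing_edges_blade(2)[of i] by auto
    from i(2) have "?reach 0 v"
    proof (elim disjE)
      assume "v = 3 * i + 1"
      then show ?thesis using to_blade[OF i(1)] \<open>t \<noteq> 0\<close> \<open>t \<noteq> v\<close> by simp
    next
      assume v: "v = 3 * i + 2"
      then have "?reach 0 (3 * i + 1)" "?reach (3 * i + 1) v"
        using to_blade[OF i(1)] down1[OF i(1)] not1 \<open>t \<noteq> 0\<close> \<open>t \<noteq> v\<close> by simp_all
      then show ?thesis by (rule reach_trans)
    next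
      assume v: "v = 3 * i + 3"
      then have "?reach 0 (3 * i + 1)" "?reach (3 * i + 1) (3 * i + 2)" "?reach (3 * i + 2) v"
        using to_blade[OF i(1)] down1[OF i(1)] down2[OF i(1)] not1 not2 \<open>t \<noteq> 0\<close> \<open>t \<noteq> v\<close>
        by simp_all
      then show ?thesis by (blast intro: reach_trans)
    qed
    then show ?thesis using hub(2) by blast
  next
    case (edge12 i)
    then show ?thesis using down1 assms(2) by blast
  next
    case (edge23 i)
    then show ?thesis using down2 assms(2) by blast
  next
    case (edge13 i)
    have "t \<noteq> 3 * i + 2" using assms(3) edge13(2) windmill_crossing_edges_blade(2)[of i] by auto
    then have "?reach (3 * i + 1) (3 * i + 2)" "?reach (3 * i + 2) (3 * i + 3)"
      using down1[OF edge13(1)] down2[OF edge13(1)] assms(2) edge13(2) by simp_all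
    then show ?thesis using edge13(2) by (blast intro: reach_trans)
  qed
qed

lemma cross_singleton_bags_le:
  assumes "finite E"
  shows "cross E N F (\<lambda>s. {s}) t
    \<le> card {e\<in>E. \<exists>u v. e = {u, v} \<and> u \<in> N - {t} \<and> v \<in> N - {t} \<and> \<not> reach F (N - {t}) u v}"
  unfolding cross_def
proof (rule card_mono)
  show "finite {e\<in>E. \<exists>u v. e = {u, v} \<and> u \<in> N - {t} \<and> v \<in> N - {t} \<and> \<not> reach F (N - {t}) u v}"
    using assms by simp
next
  show "{e\<in>E. \<exists>C1\<in>comps N F t. \<exists>C2\<in>comps N F t. C1 \<noteq> C2 \<and>
          (\<exists>u v. e = {u, v} \<and> u \<in> Zset (\<lambda>s. {s}) C1 \<and> v \<in> Zset (\<lambda>s. {s}) C2)}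
    \<subseteq> {e\<in>E. \<exists>u v. e = {u, v} \<and> u \<in> N - {t} \<and> v \<in> N - {t} \<and> \<not> reach F (N - {t}) u v}"
  proof (rule subsetI, elim CollectE conjE bexE exE, intro CollectI conjI exI)
    fix e C1 C2 u v
    assume e: "e \<in> E" "C1 \<in> comps N F t" "C2 \<in> comps N F t" "C1 \<noteq> C2" "e = {u, v}"
      "u \<in> Zset (\<lambda>s. {s}) C1" "v \<in> Zset (\<lambda>s. {s}) C2"
    then have uv: "u \<in> C1" "v \<in> C2" unfolding Zset_def by auto
    show "e \<in> E" "e = {u, v}" using e by auto
    show "u \<in> N - {t}" "v \<in> N - {t}" using uv comps_subset e(2,3) by blast+
    show "\<not> reach F (N - {t}) u v"
    proof
      assume "reach F (N - {t}) u v"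
      then have "v \<in> C1" using comps_eq_class[OF e(2) uv(1)] by blast
      then show False using comps_disjoint[OF e(2,3) _ uv(2)] e(4) by blast
    qed
  qed
qed

lemma cross_windmill_le: "cross (windmill_E n) (windmill_V n) (windmill_tree n) (\<lambda>s. {s}) t \<le> 2"
proof -
  let ?B = "{e\<in>windmill_E n. \<exists>u v. e = {u, v} \<and> u \<in> windmill_V n - {t} \<and> v \<in> windmill_V n - {t}
              \<and> \<not> reach (windmill_tree n) (windmill_V n - {t}) u v}"
  have "?B \<subseteq> windmill_crossing_edges t"
  proof
    fix e assume "e \<in> ?B"
    then obtain u v where e: "e \<in> windmill_E n" "e = {u, v}" "u \<in> windmill_V n - {t}"
        "v \<in> windmill_V n - {t}" "\<not> reach (windmill_tree n) (windmill_V n - {t}) u v"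
      by blast
    show "e \<in> windmill_crossing_edges t"
    proof (rule ccontr)
      assume "e \<notin> windmill_crossing_edges t"
      moreover have "t \<notin> e" using e by auto
      ultimately obtain a b where "e = {a, b}" "reach (windmill_tree n) (windmill_V n - {t}) a b"
        using windmill_edge_reach e(1) by blast
      then show False using e(2,5) reach_sym by (metis doubleton_eq_iff)
    qed
  qed
  then have "card ?B \<le> card (windmill_crossing_edges t)"
    by (rule card_mono[rotated]) (simp add: windmill_crossing_edges_def)
  moreover have "finite (windmill_E n)"
    using hub_graph_windmill unfolding hub_graph_def by (blast intro: ugraph_finite_edges)
  ultimately show ?thesis
    using cross_singleton_bags_le card_windmill_crossing_edges by (meson order_trans)
qed

lemma ecrw_windmill_le:
  assumes "\<alpha> > 0"
  shows "ecrw \<alpha> (windmill_V n) (windmill_E n) \<le> 2"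
  unfolding ecrw_def
proof (rule Least_le, intro exI conjI)
  show "tcd (windmill_V n) (windmill_E n) (windmill_V n) (windmill_tree n) (\<lambda>s. {s})"
    unfolding tcd_def using is_tree_windmill_tree by auto
  have "finite (windmill_V n)" "windmill_V n \<noteq> {}" unfolding windmill_V_def by auto
  then show "thickness (windmill_V n) (\<lambda>s. {s}) \<le> \<alpha>"
    unfolding thickness_def using assms by simp
  show "crossing_number (windmill_E n) (windmill_V n) (windmill_tree n) (\<lambda>s. {s}) \<le> 2"
    unfolding crossing_number_def using \<open>finite (windmill_V n)\<close> \<open>windmill_V n \<noteq> {}\<close>
    by (simp add: cross_windmill_le)
qed

lemma not_bounded_by_ecrw:
  fixes width :: "nat set \<Rightarrow> nat set set \<Rightarrow> nat"
  assumes "\<alpha> > 0"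
    and lower: "\<And>V E. hub_graph V E \<Longrightarrow> card V \<le> width V E + width V E * width V E"
  shows "\<not> (\<exists>f :: nat \<Rightarrow> nat. \<forall>V E. ugraph V E \<longrightarrow> width V E \<le> f (ecrw \<alpha> V E))"
proof
  assume "\<exists>f :: nat \<Rightarrow> nat. \<forall>V E. ugraph V E \<longrightarrow> width V E \<le> f (ecrw \<alpha> V E)"
  then obtain f :: "nat \<Rightarrow> nat" where f: "\<And>V E. ugraph V E \<Longrightarrow> width V E \<le> f (ecrw \<alpha> V E)"
    by blast
  define K where "K = f 0 + f 1 + f 2"
  define n where "n = K * K + K"
  let ?V = "windmill_V n" and ?E = "windmill_E n"
  have "ecrw \<alpha> ?V ?E \<le> 2" using assms(1) by (rule ecrw_windmill_le)
  then have "f (ecrw \<alpha> ?V ?E) \<le> K" unfolding K_def by (auto simp: le_Suc_eq numeral_2_eq_2)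
  moreover have "width ?V ?E \<le> f (ecrw \<alpha> ?V ?E)"
    using f hub_graph_windmill unfolding hub_graph_def by blast
  ultimately have "width ?V ?E + width ?V ?E * width ?V ?E \<le> K + K * K"
    by (meson add_le_mono mult_le_mono order_trans)
  moreover have "card ?V \<le> width ?V ?E + width ?V ?E * width ?V ?E"
    using lower hub_graph_windmill by blast
  ultimately have "3 * (K * K + K) + 1 \<le> K + K * K" unfolding card_windmill_V n_def by linarith
  then show False by (simp add: algebra_simps)
qed

theorem lemma3p7:
  fixes \<alpha> :: nat
  assumes "\<alpha> > 0"
  shows "\<not> (\<exists>f :: nat \<Rightarrow> nat. \<forall>V E. ugraph V E \<longrightarrow> stcw V E \<le> f (ecrw \<alpha> V E)) \<and>
         \<not> (\<exists>f :: nat \<Rightarrow> nat. \<forall>V E. ugraph V E \<longrightarrow> tcw V E \<le> f (ecrw \<alpha> V E))"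
  using not_bounded_by_ecrw[where width = stcw, OF assms card_le_width(1)]
    not_bounded_by_ecrw[where width = tcw, OF assms card_le_width(2)]
  by blast

end
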